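(* Let $V$ be an $n$-dimensional complex vector space, $\Lambda(V\otimes V^* )$ the exterior algebra on $V\otimes V^*$, and $X=(x_{ij})_{1\le i,j\le n}\in\operatorname{Mat}_{n,n}(\Lambda(V\otimes V^* ))$. Then $$nX^{2n-1}-\operatorname{tr}(X^1)X^{2n-2}-\operatorname{tr}(X^3)X^{2n-4}-\cdots-\operatorname{tr}(X^{2n-3})X^2-\operatorname{tr}(X^{2n-1})X^0=0,$$ i.e. $nX^{2n-1}-\sum_{k=0}^{n-1}\operatorname{tr}(X^{2k+1})X^{2n-2-2k}=0$, where $X^0$ is the identity matrix.
   Context: $e_1,\ldots,e_n$ is a basis of $V$, $e_i^*$ its dual basis, $x_{ij}=e_i\otimes e_j^*$ is the standard basis of $V\otimes V^*$. Products in the exterior algebra are wedge products; matrix products are taken with entries multiplied in the order written. *)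

theory Defs
  imports Complex_Main
begin

text \<open>Exterior algebra on the n^2-dimensional complex vector space with basis
  x_ij = e_i (x) e_j^* (0 <= i,j < n), encoded by the index i*n+j.
  An element is its coefficient function on monomials: a finite set S of
  basis indices stands for the wedge product of the basis vectors in S
  taken in increasing order.\<close>

type_synonym ext = "nat set \<Rightarrow> complex"

definition ext_zero :: ext where "ext_zero = (\<lambda>S. 0)"
definition ext_one :: ext where "ext_one = (\<lambda>S. if S = {} then 1 else 0)"
definition ext_add :: "ext \<Rightarrow> ext \<Rightarrow> ext" where "ext_add a b = (\<lambda>S. a S + b S)"
definition ext_diff :: "ext \<Rightarrow> ext \<Rightarrow> ext" where "ext_diff a b = (\<lambda>S. a S - b S)"
definition ext_smul :: "complex \<Rightarrow> ext \<Rightarrow> ext" where "ext_smul c a = (\<lambda>S. c * a S)"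

text \<open>Sign of reordering e_S /\ e_T into increasing order (S, T disjoint).\<close>
definition ext_sign :: "nat set \<Rightarrow> nat set \<Rightarrow> complex" where
  "ext_sign S T = (-1) ^ card {(s, t). s \<in> S \<and> t \<in> T \<and> t < s}"

definition ext_mul :: "ext \<Rightarrow> ext \<Rightarrow> ext" where
  "ext_mul a b = (\<lambda>U. \<Sum>S\<in>Pow U. ext_sign S (U - S) * a S * b (U - S))"

definition ext_gen :: "nat \<Rightarrow> ext" where
  "ext_gen m = (\<lambda>S. if S = {m} then 1 else 0)"

definition ext_sum :: "('a \<Rightarrow> ext) \<Rightarrow> 'a set \<Rightarrow> ext" where
  "ext_sum f A = (\<lambda>S. \<Sum>a\<in>A. f a S)"

text \<open>n x n matrices over the exterior algebra (entries for i,j < n are relevant).\<close>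
type_synonym emat = "nat \<Rightarrow> nat \<Rightarrow> ext"

definition genX :: "nat \<Rightarrow> emat" where
  "genX n = (\<lambda>i j. ext_gen (i * n + j))"

definition emat_mul :: "nat \<Rightarrow> emat \<Rightarrow> emat \<Rightarrow> emat" where
  "emat_mul n A B = (\<lambda>i j. ext_sum (\<lambda>k. ext_mul (A i k) (B k j)) {..<n})"

definition emat_id :: emat where
  "emat_id = (\<lambda>i j. if i = j then ext_one else ext_zero)"

primrec emat_pow :: "nat \<Rightarrow> emat \<Rightarrow> nat \<Rightarrow> emat" where
  "emat_pow n A 0 = emat_id"
| "emat_pow n A (Suc m) = emat_mul n (emat_pow n A m) A"

definition emat_tr :: "nat \<Rightarrow> emat \<Rightarrow> ext" where
  "emat_tr n A = ext_sum (\<lambda>i. A i i) {..<n}"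

end

theory Submission
  imports Defs "Jordan_Normal_Form.Determinant"
begin

text \<open>
  The entries \<open>x\<^sub>i\<^sub>j\<close> are odd elements of the exterior algebra. By Rosset's theorem an
  \<open>n \<times> n\<close> matrix \<open>A\<close> with odd entries satisfies \<open>A\<^sup>2\<^sup>n = 0\<close>: the entries of \<open>A\<^sup>2\<close> lie in the
  commutative even subalgebra, every \<open>tr (A\<^sup>2\<^sup>k)\<close> vanishes because odd elements anticommute, and
  over a torsion-free commutative ring an \<open>n \<times> n\<close> matrix whose powers are all traceless has
  vanishing \<open>n\<close>-th power. Apply this to \<open>X\<close> and to \<open>X + e E\<^sub>p\<^sub>q\<close>, where \<open>e\<close> is a generator
  not occurring in \<open>X\<close>: the part of \<open>(X + e E\<^sub>p\<^sub>q)\<^sup>2\<^sup>n\<close> linear in \<open>e\<close> vanishes, and moving \<open>e\<close>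
  to the right and cancelling it gives \<open>\<Sum>\<^sub>a \<plusminus>(X\<^sup>a)\<^sub>p\<^sub>p (X\<^sup>2\<^sup>n\<^sup>-\<^sup>1\<^sup>-\<^sup>a)\<^sub>q\<^sub>j = 0\<close>. Summing over
  \<open>p\<close> produces the traces \<open>tr (X\<^sup>a)\<close>, of which the even ones vanish except \<open>tr (X\<^sup>0) = n\<close>.
\<close>

section \<open>Formal derivatives and Jacobi's formula\<close>

text \<open>The library's \<open>pderiv\<close> requires a ring without zero divisors, which the even part of an
  exterior algebra is not.\<close>

lift_definition formal_deriv :: "'a::comm_semiring_1 poly \<Rightarrow> 'a poly"
  is "\<lambda>p k. of_nat (Suc k) * coeff p (Suc k)"
proof -
  fix p :: "'a poly"
  have "\<forall>\<^sub>\<infinity> k. coeff p (Suc k) = 0"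
    using MOST_coeff_eq_0[of p] unfolding MOST_nat by (metis Suc_lessD less_Suc_eq)
  then show "\<forall>\<^sub>\<infinity> k. of_nat (Suc k) * coeff p (Suc k) = 0"
    by (rule MOST_mono) simp
qed

lemma coeff_formal_deriv: "coeff (formal_deriv p) k = of_nat (Suc k) * coeff p (Suc k)"
  by transfer simp

lemma formal_deriv_0 [simp]: "formal_deriv 0 = 0"
  by (rule poly_eqI) (simp add: coeff_formal_deriv)

lemma formal_deriv_1 [simp]: "formal_deriv 1 = 0"
  by (rule poly_eqI) (simp add: coeff_formal_deriv)

lemma formal_deriv_add: "formal_deriv (p + q) = formal_deriv p + formal_deriv q"
  by (rule poly_eqI) (simp add: coeff_formal_deriv algebra_simps)

lemma formal_deriv_diff:
  "formal_deriv (p - q :: 'a::comm_ring_1 poly) = formal_deriv p - formal_deriv q"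
  by (rule poly_eqI) (simp add: coeff_formal_deriv algebra_simps)

lemma formal_deriv_smult: "formal_deriv (smult a p) = smult a (formal_deriv p)"
  by (rule poly_eqI) (simp add: coeff_formal_deriv algebra_simps)

lemma formal_deriv_pCons: "formal_deriv (pCons a p) = p + pCons 0 (formal_deriv p)"
  by (rule poly_eqI) (auto simp: coeff_formal_deriv coeff_pCons algebra_simps split: nat.split)

lemma formal_deriv_mult: "formal_deriv (p * q) = p * formal_deriv q + q * formal_deriv p"
  by (induct p) (auto simp: formal_deriv_add formal_deriv_smult formal_deriv_pCons algebra_simps)

lemma formal_deriv_sum: "formal_deriv (sum f A) = (\<Sum>a\<in>A. formal_deriv (f a))"
  by (induct A rule: infinite_finite_induct) (auto simp: formal_deriv_add)

lemma formal_deriv_prod: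
  "formal_deriv (prod f A) = (\<Sum>a\<in>A. prod f (A - {a}) * formal_deriv (f a))"
proof (induct A rule: infinite_finite_induct)
  case (insert a A)
  have "prod f (insert a A - {b}) = f a * prod f (A - {b})" if "b \<in> A" for b
  proof -
    from \<open>a \<notin> A\<close> that have "insert a A - {b} = insert a (A - {b})"
      by auto
    then show ?thesis
      using insert(1,2) by simp
  qed
  with insert show ?case
    by (auto simp: formal_deriv_mult sum_distrib_left ac_simps intro!: sum.cong)
qed (auto simp: poly_eq_iff coeff_formal_deriv)

lemma formal_deriv_of_int_mult:
  "formal_deriv (of_int k * (q::'a::comm_ring_1 poly)) = of_int k * formal_deriv q"
proof -
  have "formal_deriv (of_int k :: 'a poly) = 0"
    by (rule poly_eqI) (simp add: coeff_formal_deriv of_int_poly)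
  then show ?thesis
    by (simp add: formal_deriv_mult)
qed

lemma formal_deriv_det:
  fixes M :: "'a::comm_ring_1 poly mat"
  assumes M: "M \<in> carrier_mat n n"
  shows "formal_deriv (det M) = (\<Sum>a<n. \<Sum>j<n. formal_deriv (M $$ (a,j)) * cofactor M a j)"
proof -
  define Ma where
    "Ma a = mat n n (\<lambda>(i,j). if i = a then formal_deriv (M $$ (i,j)) else M $$ (i,j))" for a
  have Ma: "Ma a \<in> carrier_mat n n" for a
    unfolding Ma_def by auto
  have "det (Ma a) = (\<Sum>j<n. formal_deriv (M $$ (a,j)) * cofactor M a j)" if a: "a < n" for a
  proof -
    have "mat_delete (Ma a) a j = mat_delete M a j" if "j < n" for j
      using M a that unfolding Ma_def mat_delete_def by (auto intro!: eq_matI)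
    then show ?thesis
      using a unfolding laplace_expansion_row[OF Ma a] cofactor_def
      by (auto simp: Ma_def intro!: sum.cong)
  qed
  moreover have "det (Ma a) = (\<Sum>p | p permutes {0..<n}. signof p *
      ((\<Prod>i\<in>{0..<n} - {a}. M $$ (i, p i)) * formal_deriv (M $$ (a, p a))))"
    if a: "a < n" for a
    unfolding det_def'[OF Ma]
  proof (rule sum.cong[OF refl])
    fix p assume "p \<in> {p. p permutes {0..<n}}"
    then have pi: "i < n \<Longrightarrow> p i < n" for i
      by (simp add: permutes_in_image)
    have "(\<Prod>i = 0..<n. Ma a $$ (i, p i)) =
        Ma a $$ (a, p a) * (\<Prod>i\<in>{0..<n} - {a}. Ma a $$ (i, p i))"
      using a by (subst prod.remove[of _ a]) auto
    also have "\<dots> = formal_deriv (M $$ (a, p a)) * (\<Prod>i\<in>{0..<n} - {a}. M $$ (i, p i))"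
      using a pi by (auto simp: Ma_def intro!: prod.cong)
    finally show "signof p * (\<Prod>i = 0..<n. Ma a $$ (i, p i)) = signof p *
        ((\<Prod>i\<in>{0..<n} - {a}. M $$ (i, p i)) * formal_deriv (M $$ (a, p a)))"
      by (simp add: ac_simps)
  qed
  moreover have "formal_deriv (det M) = (\<Sum>p | p permutes {0..<n}. \<Sum>a\<in>{0..<n}. signof p *
      ((\<Prod>i\<in>{0..<n} - {a}. M $$ (i, p i)) * formal_deriv (M $$ (a, p a))))"
    by (simp add: det_def'[OF M] formal_deriv_sum formal_deriv_of_int_mult formal_deriv_prod
        sum_distrib_left)
  ultimately show ?thesis
    by (subst (asm) sum.swap) (auto simp: atLeast0LessThan intro!: sum.cong)
qed

section \<open>Matrices with traceless powers\<close>

definition mat_trace :: "'a::comm_monoid_add mat \<Rightarrow> 'a" where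
  "mat_trace A = (\<Sum>i<dim_row A. A $$ (i,i))"

lemma mat_trace_carrier: "A \<in> carrier_mat n m \<Longrightarrow> mat_trace A = (\<Sum>i<n. A $$ (i,i))"
  unfolding mat_trace_def by simp

lemma index_mult_mat_sum:
  "A \<in> carrier_mat n m \<Longrightarrow> B \<in> carrier_mat m k \<Longrightarrow> i < n \<Longrightarrow> j < k \<Longrightarrow>
    (A * B) $$ (i,j) = (\<Sum>l<m. A $$ (i,l) * B $$ (l,j))"
  by (simp add: scalar_prod_def atLeast0LessThan)

lemma index_pow_mat_Suc:
  "A \<in> carrier_mat n n \<Longrightarrow> i < n \<Longrightarrow> j < n \<Longrightarrow>
    (A ^\<^sub>m Suc k) $$ (i,j) = (\<Sum>l<n. (A ^\<^sub>m k) $$ (i,l) * A $$ (l,j))"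
  by (simp only: pow_mat.simps) (rule index_mult_mat_sum[OF pow_carrier_mat])

lemma pow_mat_Suc_left:
  assumes A: "A \<in> carrier_mat n n"
  shows "A ^\<^sub>m Suc k = A * A ^\<^sub>m k"
proof (induct k)
  case (Suc k)
  have "A ^\<^sub>m Suc (Suc k) = (A * A ^\<^sub>m k) * A"
    using Suc by simp
  also have "\<dots> = A * (A ^\<^sub>m k * A)"
    using A by (subst assoc_mult_mat) auto
  finally show ?case
    by simp
qed (use A in simp)

lemma pow_mat_double:
  assumes A: "A \<in> carrier_mat n n"
  shows "(A * A) ^\<^sub>m k = A ^\<^sub>m (2 * k)"
proof (induct k)
  case (Suc k)
  have "(A * A) ^\<^sub>m Suc k = A ^\<^sub>m (2 * k) * (A * A)"
    using Suc by simp
  also have "\<dots> = A ^\<^sub>m (2 * Suc k)"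
    using A by (simp add: assoc_mult_mat[symmetric, of _ n n _ n _ n])
  finally show ?case .
qed (use A in simp)

interpretation const_poly_hom: semiring_hom "\<lambda>a::'a::comm_semiring_1. [:a:]"
  by unfold_locales (auto simp: one_pCons mult.commute)

definition const_poly_mat :: "'a::zero mat \<Rightarrow> 'a poly mat" where
  "const_poly_mat Y = map_mat (\<lambda>a. [:a:]) Y"

lemma dim_const_poly_mat [simp]:
  "dim_row (const_poly_mat Z) = dim_row Z" "dim_col (const_poly_mat Z) = dim_col Z"
  unfolding const_poly_mat_def by simp_all

lemma index_const_poly_mat [simp]:
  "i < dim_row Z \<Longrightarrow> j < dim_col Z \<Longrightarrow> const_poly_mat Z $$ (i,j) = [:Z $$ (i,j):]"
  unfolding const_poly_mat_def by simp

text \<open>The matrix \<open>1 - tY\<close>, whose determinant is the reversed characteristic polynomial of \<open>Y\<close>.\<close>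

definition rev_char_mat :: "'a::comm_ring_1 mat \<Rightarrow> 'a poly mat" where
  "rev_char_mat Y =
    mat (dim_row Y) (dim_row Y) (\<lambda>(i,j). (if i = j then 1 else 0) - monom 1 1 * [:Y $$ (i,j):])"

context
  fixes Y :: "'a::comm_ring_1 mat" and n :: nat
  assumes Y: "Y \<in> carrier_mat n n"
begin

lemma rev_char_mat_carrier: "rev_char_mat Y \<in> carrier_mat n n"
  using Y unfolding rev_char_mat_def by auto

lemma adj_rev_char_mat_carrier: "adj_mat (rev_char_mat Y) \<in> carrier_mat n n"
  using adj_mat(1)[OF rev_char_mat_carrier] .

lemma const_poly_mat_carrier: "const_poly_mat Y \<in> carrier_mat n n"
  using Y unfolding const_poly_mat_def by auto

lemma const_poly_mat_pow: "const_poly_mat Y ^\<^sub>m k = const_poly_mat (Y ^\<^sub>m k)"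
  unfolding const_poly_mat_def by (rule const_poly_hom.mat_hom_pow[OF Y, symmetric])

text \<open>The adjugate identity \<open>B (1 - tC) = d\<close>, read as a recursion \<open>B = d + t B C\<close>.\<close>

lemma index_adj_rev_char_mat:
  defines "B \<equiv> adj_mat (rev_char_mat Y)" and "C \<equiv> const_poly_mat Y"
  assumes ij: "i < n" "j < n"
  shows "B $$ (i,j) = (if i = j then det (rev_char_mat Y) else 0) + monom 1 1 * (B * C) $$ (i,j)"
proof -
  have B: "B \<in> carrier_mat n n" and C: "C \<in> carrier_mat n n"
    unfolding B_def C_def using adj_rev_char_mat_carrier const_poly_mat_carrier by auto
  have "(B * rev_char_mat Y) $$ (i,j) = (\<Sum>r<n. B $$ (i,r) * rev_char_mat Y $$ (r,j))"
    by (rule index_mult_mat_sum[OF B rev_char_mat_carrier ij])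
  also have "\<dots> = (\<Sum>r<n. B $$ (i,r) * (if r = j then 1 else 0)) -
      monom 1 1 * (\<Sum>r<n. B $$ (i,r) * C $$ (r,j))"
    using Y ij by (simp add: rev_char_mat_def C_def algebra_simps sum_subtractf sum_distrib_left)
  also have "(\<Sum>r<n. B $$ (i,r) * (if r = j then 1 else 0)) = B $$ (i,j)"
    using ij by (simp add: if_distrib sum.delta cong: if_cong)
  also have "(\<Sum>r<n. B $$ (i,r) * C $$ (r,j)) = (B * C) $$ (i,j)"
    by (rule index_mult_mat_sum[OF B C ij, symmetric])
  finally have "(B * rev_char_mat Y) $$ (i,j) = B $$ (i,j) - monom 1 1 * (B * C) $$ (i,j)" .
  moreover have "(B * rev_char_mat Y) $$ (i,j) = (if i = j then det (rev_char_mat Y) else 0)"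
    using adj_mat(3)[OF rev_char_mat_carrier] ij unfolding B_def by simp
  ultimately show ?thesis
    by (simp add: algebra_simps)
qed

lemma adj_rev_char_mat_mult_pow:
  defines "B \<equiv> adj_mat (rev_char_mat Y)" and "C \<equiv> const_poly_mat Y"
  assumes ij: "i < n" "j < n"
  shows "(B * C ^\<^sub>m k) $$ (i,j) =
    det (rev_char_mat Y) * (C ^\<^sub>m k) $$ (i,j) + monom 1 1 * (B * C ^\<^sub>m Suc k) $$ (i,j)"
proof -
  define d T where "d = det (rev_char_mat Y)" and "T = (monom 1 1 :: 'a poly)"
  have B: "B \<in> carrier_mat n n" and C: "C \<in> carrier_mat n n" and Ck: "C ^\<^sub>m k \<in> carrier_mat n n"
    unfolding B_def C_def using adj_rev_char_mat_carrier const_poly_mat_carrier by auto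
  have "(B * C ^\<^sub>m k) $$ (i,j) = (\<Sum>l<n. B $$ (i,l) * (C ^\<^sub>m k) $$ (l,j))"
    by (rule index_mult_mat_sum[OF B Ck ij])
  also have "\<dots> = (\<Sum>l<n. (if i = l then d * (C ^\<^sub>m k) $$ (l,j) else 0) +
      T * ((B * C) $$ (i,l) * (C ^\<^sub>m k) $$ (l,j)))"
    using ij unfolding B_def C_def d_def T_def
    by (intro sum.cong refl) (simp add: index_adj_rev_char_mat algebra_simps)
  also have "\<dots> = (\<Sum>l<n. (if i = l then d * (C ^\<^sub>m k) $$ (l,j) else 0)) +
      T * (\<Sum>l<n. (B * C) $$ (i,l) * (C ^\<^sub>m k) $$ (l,j))"
    by (simp only: sum.distrib sum_distrib_left)
  also have "(\<Sum>l<n. (B * C) $$ (i,l) * (C ^\<^sub>m k) $$ (l,j)) = ((B * C) * C ^\<^sub>m k) $$ (i,j)"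
    by (rule index_mult_mat_sum[OF mult_carrier_mat[OF B C] Ck ij, symmetric])
  also have "(B * C) * C ^\<^sub>m k = B * C ^\<^sub>m Suc k"
    by (simp add: assoc_mult_mat[OF B C Ck] pow_mat_Suc_left[OF C] del: pow_mat.simps)
  also have "(\<Sum>l<n. (if i = l then d * (C ^\<^sub>m k) $$ (l,j) else 0)) = d * (C ^\<^sub>m k) $$ (i,j)"
    using ij by (simp add: sum.delta)
  finally show ?thesis
    by (simp add: d_def T_def)
qed

lemma formal_deriv_det_rev_char_mat:
  "formal_deriv (det (rev_char_mat Y)) =
    - mat_trace (adj_mat (rev_char_mat Y) * const_poly_mat Y)"
proof -
  let ?M = "rev_char_mat Y" and ?B = "adj_mat (rev_char_mat Y)" and ?C = "const_poly_mat Y"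
  have M: "?M \<in> carrier_mat n n" and B: "?B \<in> carrier_mat n n" and C: "?C \<in> carrier_mat n n"
    by (rule rev_char_mat_carrier adj_rev_char_mat_carrier const_poly_mat_carrier)+
  have deriv_entry: "formal_deriv (?M $$ (a,j)) = - ?C $$ (a,j)" if "a < n" "j < n" for a j
  proof -
    have "formal_deriv (monom 1 1 :: 'a poly) = 1"
      by (rule poly_eqI) (simp add: coeff_formal_deriv coeff_monom)
    then show ?thesis
      using that Y by (simp add: rev_char_mat_def formal_deriv_diff formal_deriv_mult formal_deriv_smult)
  qed
  have cofactor_entry: "cofactor ?M a j = ?B $$ (j,a)" if "a < n" "j < n" for a j
    using that M unfolding adj_mat_def by simp
  have "formal_deriv (det ?M) = (\<Sum>a<n. \<Sum>j<n. - (?B $$ (j,a) * ?C $$ (a,j)))"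
    unfolding formal_deriv_det[OF M]
    by (auto simp: deriv_entry cofactor_entry mult.commute intro!: sum.cong)
  also have "\<dots> = - mat_trace (?B * ?C)"
    unfolding mat_trace_carrier[OF mult_carrier_mat[OF B C]] using B C
    by (subst sum.swap)
      (auto simp: sum_negf index_mult_mat_sum[OF B C] simp del: index_mult_mat intro!: sum.cong)
  finally show ?thesis .
qed

lemma trace_adj_rev_char_mat_mult_pow:
  assumes traceless: "mat_trace (Y ^\<^sub>m k) = 0"
  shows "mat_trace (adj_mat (rev_char_mat Y) * const_poly_mat Y ^\<^sub>m k) =
    monom 1 1 * mat_trace (adj_mat (rev_char_mat Y) * const_poly_mat Y ^\<^sub>m Suc k)"
proof -
  define B C d where "B = adj_mat (rev_char_mat Y)" and "C = const_poly_mat Y"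
    and "d = det (rev_char_mat Y)"
  have B: "B \<in> carrier_mat n n" and C: "C \<in> carrier_mat n n"
    unfolding B_def C_def using adj_rev_char_mat_carrier const_poly_mat_carrier by auto
  then have BC: "B * C ^\<^sub>m k \<in> carrier_mat n n" for k
    by simp
  have "mat_trace (C ^\<^sub>m k) = 0"
    using traceless Y unfolding C_def const_poly_mat_pow
    by (simp add: mat_trace_def flip: const_poly_hom.hom_sum)
  moreover have "mat_trace (B * C ^\<^sub>m k) =
      (\<Sum>i<n. d * (C ^\<^sub>m k) $$ (i,i) + monom 1 1 * (B * C ^\<^sub>m Suc k) $$ (i,i))"
    unfolding mat_trace_carrier[OF BC]
    by (intro sum.cong refl) (simp add: B_def C_def d_def adj_rev_char_mat_mult_pow)
  moreover have "\<dots> = d * mat_trace (C ^\<^sub>m k) + monom 1 1 * mat_trace (B * C ^\<^sub>m Suc k)"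
    unfolding mat_trace_carrier[OF pow_carrier_mat[OF C]] mat_trace_carrier[OF BC]
    by (simp add: sum.distrib sum_distrib_left)
  ultimately show ?thesis
    unfolding B_def C_def by simp
qed

text \<open>By the previous lemma \<open>tr (adj (1 - tY) Y)\<close>, which is minus this derivative, is divisible
  by every power of \<open>t\<close>.\<close>

lemma formal_deriv_det_rev_char_mat_eq_0:
  assumes traceless: "\<And>k. 1 \<le> k \<Longrightarrow> mat_trace (Y ^\<^sub>m k) = 0"
  shows "formal_deriv (det (rev_char_mat Y)) = 0"
proof -
  let ?tr = "\<lambda>k. mat_trace (adj_mat (rev_char_mat Y) * const_poly_mat Y ^\<^sub>m k)"
  have "\<forall>k\<ge>1. monom 1 m dvd ?tr k" for m
  proof (induct m)
    case (Suc m)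
    have "monom 1 (Suc m) = monom 1 1 * (monom 1 m :: 'a poly)"
      by (simp add: mult_monom)
    then show ?case
      using Suc trace_adj_rev_char_mat_mult_pow[OF traceless]
      by (metis le_SucI mult_dvd_mono dvd_refl)
  qed simp
  moreover have "const_poly_mat Y ^\<^sub>m 1 = const_poly_mat Y"
    using const_poly_mat_carrier by simp
  ultimately have "monom 1 (Suc k) dvd formal_deriv (det (rev_char_mat Y))" for k
    unfolding formal_deriv_det_rev_char_mat by (metis dvd_minus_iff order_refl)
  then show ?thesis
    by (metis lessI monom_1_dvd_iff' poly_eqI coeff_0)
qed

lemma coeff_0_det_rev_char_mat: "coeff (det (rev_char_mat Y)) 0 = 1"
proof -
  interpret eval_0: comm_ring_hom "\<lambda>p::'a poly. poly p 0"
    by unfold_locales auto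
  have "map_mat (\<lambda>p. poly p 0) (rev_char_mat Y) = 1\<^sub>m n"
    using Y unfolding rev_char_mat_def by (auto intro!: eq_matI simp: poly_monom)
  then show ?thesis
    using eval_0.hom_det[of "rev_char_mat Y"] by (simp add: poly_0_coeff_0)
qed

lemma det_rev_char_mat_eq_1:
  assumes torsion_free: "\<And>k (c::'a). 0 < k \<Longrightarrow> of_nat k * c = 0 \<Longrightarrow> c = 0"
    and traceless: "\<And>k. 1 \<le> k \<Longrightarrow> mat_trace (Y ^\<^sub>m k) = 0"
  shows "det (rev_char_mat Y) = 1"
proof (rule poly_eqI)
  fix k
  have "coeff (det (rev_char_mat Y)) (Suc m) = 0" for m
    using formal_deriv_det_rev_char_mat_eq_0[OF traceless] torsion_free[of "Suc m"]
    by (metis coeff_formal_deriv coeff_0 zero_less_Suc)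
  then show "coeff (det (rev_char_mat Y)) k = coeff 1 k"
    using coeff_0_det_rev_char_mat by (cases k) simp_all
qed

lemma coeff_adj_rev_char_mat_mult_pow:
  assumes d: "det (rev_char_mat Y) = 1" and ij: "i < n" "j < n"
  shows "coeff ((adj_mat (rev_char_mat Y) * const_poly_mat Y ^\<^sub>m k) $$ (i,j)) m =
    (Y ^\<^sub>m (k + m)) $$ (i,j)"
  using ij
proof (induct m arbitrary: k)
  case 0
  then show ?case
    by (subst adj_rev_char_mat_mult_pow) (use Y in \<open>simp_all add: d const_poly_mat_pow coeff_monom_mult\<close>)
next
  case (Suc m)
  have "coeff ((adj_mat (rev_char_mat Y) * const_poly_mat Y ^\<^sub>m k) $$ (i,j)) (Suc m) =
      coeff ((adj_mat (rev_char_mat Y) * const_poly_mat Y ^\<^sub>m Suc k) $$ (i,j)) m"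
    by (subst adj_rev_char_mat_mult_pow)
      (use Suc.prems Y in \<open>simp_all add: d const_poly_mat_pow coeff_monom_mult del: pow_mat.simps\<close>)
  then show ?case
    using Suc.hyps[of "Suc k"] Suc.prems by simp
qed

lemma degree_adj_rev_char_mat:
  assumes ij: "i < n" "j < n"
  shows "degree (adj_mat (rev_char_mat Y) $$ (i,j)) < n"
proof -
  have M: "rev_char_mat Y \<in> carrier_mat n n"
    by (rule rev_char_mat_carrier)
  have "degree (rev_char_mat Y $$ (a,b)) \<le> 1" if "a < n" "b < n" for a b
  proof -
    have "degree (monom 1 1 * [:Y $$ (a,b):]) \<le> 1"
      using degree_mult_le[of "monom 1 1" "[:Y $$ (a,b):]"] by (simp add: degree_monom_eq)
    then show ?thesis
      using that Y unfolding rev_char_mat_def by (auto intro: order_trans[OF degree_diff_le_max])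
  qed
  then have "degree (det (mat_delete (rev_char_mat Y) j i)) \<le> 1 * (n - 1)"
    by (intro degree_det_le[OF _ mat_delete_carrier[OF M]]) (use ij M in \<open>auto simp: mat_delete_def\<close>)
  moreover have "adj_mat (rev_char_mat Y) $$ (i,j) =
      (-1) ^ (j + i) * det (mat_delete (rev_char_mat Y) j i)"
    using ij M unfolding adj_mat_def cofactor_def by simp
  moreover have "degree ((-1 :: 'a poly) ^ (j + i)) = 0"
    using degree_power_le[of "-1 :: 'a poly" "j + i"] by simp
  ultimately show ?thesis
    using ij degree_mult_le[of "(-1 :: 'a poly) ^ (j + i)" "det (mat_delete (rev_char_mat Y) j i)"]
    by simp
qed

text \<open>Once \<open>det (1 - tY) = 1\<close>, the adjugate of \<open>1 - tY\<close> is its inverse \<open>\<Sum>\<^sub>k t\<^sup>k Y\<^sup>k\<close>, whose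
  entries have degree \<open>< n\<close>.\<close>

lemma pow_dim_eq_0_if_traceless_powers:
  assumes "\<And>k (c::'a). 0 < k \<Longrightarrow> of_nat k * c = 0 \<Longrightarrow> c = 0"
    and "\<And>k. 1 \<le> k \<Longrightarrow> mat_trace (Y ^\<^sub>m k) = 0"
  shows "Y ^\<^sub>m n = 0\<^sub>m n n"
proof (rule eq_matI)
  fix i j assume "i < dim_row (0\<^sub>m n n :: 'a mat)" "j < dim_col (0\<^sub>m n n :: 'a mat)"
  then have ij: "i < n" "j < n"
    by auto
  have "(Y ^\<^sub>m n) $$ (i,j) = coeff (adj_mat (rev_char_mat Y) $$ (i,j)) n"
    using coeff_adj_rev_char_mat_mult_pow[OF det_rev_char_mat_eq_1[OF assms] ij, where k=0 and m=n]
      adj_rev_char_mat_carrier Y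
    by simp
  also have "\<dots> = 0"
    by (rule coeff_eq_0[OF degree_adj_rev_char_mat[OF ij]])
  finally show "(Y ^\<^sub>m n) $$ (i,j) = 0\<^sub>m n n $$ (i,j)"
    using ij by simp
qed (use Y in auto)

end

section \<open>The exterior algebra as a ring\<close>

definition inversions :: "nat set \<Rightarrow> nat set \<Rightarrow> (nat \<times> nat) set" where
  "inversions A B = {(s, t). s \<in> A \<and> t \<in> B \<and> t < s}"

lemma ext_sign_eq_inversions: "ext_sign A B = (-1) ^ card (inversions A B)"
  unfolding ext_sign_def inversions_def by simp

lemma finite_inversions: "finite A \<Longrightarrow> finite B \<Longrightarrow> finite (inversions A B)"
  unfolding inversions_def by (rule finite_subset[of _ "A \<times> B"]) auto

lemma ext_sign_Un_left:
  assumes "finite A" "finite B" "finite C" "A \<inter> B = {}"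
  shows "ext_sign (A \<union> B) C = ext_sign A C * ext_sign B C"
proof -
  have "inversions (A \<union> B) C = inversions A C \<union> inversions B C"
    and "inversions A C \<inter> inversions B C = {}"
    using assms(4) unfolding inversions_def by auto
  then show ?thesis
    using assms by (simp add: ext_sign_eq_inversions card_Un_disjoint finite_inversions power_add)
qed

lemma ext_sign_Un_right:
  assumes "finite A" "finite B" "finite C" "B \<inter> C = {}"
  shows "ext_sign A (B \<union> C) = ext_sign A B * ext_sign A C"
proof -
  have "inversions A (B \<union> C) = inversions A B \<union> inversions A C"
    and "inversions A B \<inter> inversions A C = {}"
    using assms(4) unfolding inversions_def by auto
  then show ?thesis
    using assms by (simp add: ext_sign_eq_inversions card_Un_disjoint finite_inversions power_add)
qed

lemma ext_sign_assoc:
  assumes "finite R" "finite T" "finite W" "R \<inter> T = {}" "R \<inter> W = {}" "T \<inter> W = {}"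
  shows "ext_sign R T * ext_sign (R \<union> T) W = ext_sign R (T \<union> W) * ext_sign T W"
  using assms by (simp add: ext_sign_Un_left ext_sign_Un_right)

lemma ext_sign_empty_left [simp]: "ext_sign {} B = 1"
  unfolding ext_sign_def by simp

lemma ext_sign_empty_right [simp]: "ext_sign A {} = 1"
  unfolding ext_sign_def by simp

lemma ext_sign_swap:
  assumes "finite A" "finite B" "A \<inter> B = {}"
  shows "ext_sign B A = (-1) ^ (card A * card B) * ext_sign A B"
proof -
  have AB: "A \<times> B = inversions A B \<union> prod.swap ` inversions B A"
    and disjoint: "inversions A B \<inter> prod.swap ` inversions B A = {}"
    using assms(3) unfolding inversions_def by (auto simp: image_iff)
  have "card (prod.swap ` inversions B A) = card (inversions B A)"
    by (rule card_image) (auto simp: inj_on_def)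
  then have "card (inversions A B) + card (inversions B A) = card A * card B"
    unfolding card_cartesian_product[symmetric] AB using assms disjoint
    by (subst card_Un_disjoint) (auto simp: finite_inversions)
  then have "ext_sign A B * ext_sign B A = (-1) ^ (card A * card B)"
    by (simp add: ext_sign_eq_inversions flip: power_add)
  moreover have "ext_sign A B * ext_sign A B = 1"
    by (simp add: ext_sign_eq_inversions flip: power_add mult_2 power_mult_distrib)
  ultimately show ?thesis
    by (metis mult.assoc mult.commute mult_1)
qed

lemma sum_Pow_Pow_reindex:
  assumes "finite U"
  shows "(\<Sum>S\<in>Pow U. \<Sum>R\<in>Pow S. H R S) = (\<Sum>R\<in>Pow U. \<Sum>T\<in>Pow (U - R). H R (R \<union> T))"
proof -
  have "(\<Sum>S\<in>Pow U. \<Sum>R\<in>Pow S. H R S) = (\<Sum>(S,R)\<in>Sigma (Pow U) Pow. H R S)"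
    using assms by (intro sum.Sigma) (auto intro: finite_subset)
  also have "\<dots> = (\<Sum>(R,T)\<in>Sigma (Pow U) (\<lambda>R. Pow (U - R)). H R (R \<union> T))"
    by (rule sum.reindex_bij_witness[where i="\<lambda>(R,T). (R \<union> T, R)" and j="\<lambda>(S,R). (R, S - R)"])
      (auto simp: Un_absorb1 Un_absorb2)
  also have "\<dots> = (\<Sum>R\<in>Pow U. \<Sum>T\<in>Pow (U - R). H R (R \<union> T))"
    using assms by (intro sum.Sigma[symmetric]) auto
  finally show ?thesis .
qed

lemma ext_mul_infinite: "infinite U \<Longrightarrow> ext_mul a b U = 0"
  unfolding ext_mul_def by simp

lemma ext_mul_assoc: "ext_mul (ext_mul a b) c = ext_mul a (ext_mul b c)"
proof
  fix U
  show "ext_mul (ext_mul a b) c U = ext_mul a (ext_mul b c) U"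
  proof (cases "finite U")
    case True
    have "ext_mul (ext_mul a b) c U = (\<Sum>S\<in>Pow U. \<Sum>R\<in>Pow S.
        ext_sign S (U - S) * (ext_sign R (S - R) * a R * b (S - R)) * c (U - S))"
      unfolding ext_mul_def by (simp add: sum_distrib_left sum_distrib_right)
    also have "\<dots> = (\<Sum>R\<in>Pow U. \<Sum>T\<in>Pow (U - R). ext_sign (R \<union> T) (U - (R \<union> T)) *
        (ext_sign R (R \<union> T - R) * a R * b (R \<union> T - R)) * c (U - (R \<union> T)))"
      by (rule sum_Pow_Pow_reindex[OF True])
    also have "\<dots> = (\<Sum>R\<in>Pow U. \<Sum>T\<in>Pow (U - R).
        ext_sign R (U - R) * a R * (ext_sign T (U - R - T) * b T * c (U - R - T)))"
    proof (intro sum.cong refl)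
      fix R T assume R: "R \<in> Pow U" and T: "T \<in> Pow (U - R)"
      then have fin: "finite R" "finite T" "finite (U - R - T)"
        using True by (auto intro: finite_subset)
      have "ext_sign R T * ext_sign (R \<union> T) (U - R - T) =
          ext_sign R (T \<union> (U - R - T)) * ext_sign T (U - R - T)"
        by (rule ext_sign_assoc) (use fin T in auto)
      moreover have "R \<union> T - R = T" "U - (R \<union> T) = U - R - T" "T \<union> (U - R - T) = U - R"
        using T by auto
      ultimately show "ext_sign (R \<union> T) (U - (R \<union> T)) * (ext_sign R (R \<union> T - R) * a R *
          b (R \<union> T - R)) * c (U - (R \<union> T)) =
          ext_sign R (U - R) * a R * (ext_sign T (U - R - T) * b T * c (U - R - T))"
        by (simp add: algebra_simps)
    qed
    also have "\<dots> = ext_mul a (ext_mul b c) U"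
      unfolding ext_mul_def by (simp add: sum_distrib_left Diff_Diff_Int Int_commute)
    finally show ?thesis .
  qed (simp add: ext_mul_infinite)
qed

text \<open>\<open>ext_mul\<close> vanishes at infinite index sets, so \<open>ext_one\<close> is a unit only for coefficient
  functions that vanish there as well; these form the carrier of the ring.\<close>

definition zero_on_infinite :: "ext \<Rightarrow> bool" where
  "zero_on_infinite a \<longleftrightarrow> (\<forall>S. infinite S \<longrightarrow> a S = 0)"

lemma ext_mul_one_left: "zero_on_infinite b \<Longrightarrow> ext_mul ext_one b = b"
proof
  fix U assume b: "zero_on_infinite b"
  show "ext_mul ext_one b U = b U"
  proof (cases "finite U")
    case True
    have "ext_mul ext_one b U = (\<Sum>S\<in>Pow U. if S = {} then b U else 0)"
      unfolding ext_mul_def by (rule sum.cong) (auto simp: ext_one_def)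
    also have "\<dots> = b U"
      using True by (subst sum.delta) auto
    finally show ?thesis .
  qed (use b in \<open>simp add: ext_mul_infinite zero_on_infinite_def\<close>)
qed

lemma ext_mul_one_right: "zero_on_infinite b \<Longrightarrow> ext_mul b ext_one = b"
proof
  fix U assume b: "zero_on_infinite b"
  show "ext_mul b ext_one U = b U"
  proof (cases "finite U")
    case True
    have "ext_mul b ext_one U = (\<Sum>S\<in>Pow U. if S = U then b U else 0)"
      unfolding ext_mul_def by (rule sum.cong) (auto simp: ext_one_def)
    also have "\<dots> = b U"
      using True by (subst sum.delta) auto
    finally show ?thesis .
  qed (use b in \<open>simp add: ext_mul_infinite zero_on_infinite_def\<close>)
qed

typedef exterior = "{a. zero_on_infinite a}"
  by (rule exI[of _ ext_zero]) (simp add: zero_on_infinite_def ext_zero_def)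

setup_lifting type_definition_exterior

instantiation exterior :: ring_1
begin

lift_definition zero_exterior :: exterior is ext_zero
  by (simp add: zero_on_infinite_def ext_zero_def)
lift_definition one_exterior :: exterior is ext_one
  by (simp add: zero_on_infinite_def ext_one_def)
lift_definition plus_exterior :: "exterior \<Rightarrow> exterior \<Rightarrow> exterior" is ext_add
  by (simp add: zero_on_infinite_def ext_add_def)
lift_definition minus_exterior :: "exterior \<Rightarrow> exterior \<Rightarrow> exterior" is ext_diff
  by (simp add: zero_on_infinite_def ext_diff_def)
lift_definition uminus_exterior :: "exterior \<Rightarrow> exterior" is "ext_smul (-1)"
  by (simp add: zero_on_infinite_def ext_smul_def)
lift_definition times_exterior :: "exterior \<Rightarrow> exterior \<Rightarrow> exterior" is ext_mul
  by (simp add: zero_on_infinite_def ext_mul_infinite)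

instance
proof
  fix a b c :: exterior
  show "a * b * c = a * (b * c)"
    by transfer (rule ext_mul_assoc)
  show "a + b + c = a + (b + c)" "a + b = b + a" "0 + a = a" "- a + a = 0" "a - b = a + - b"
    by (transfer; simp add: ext_add_def ext_diff_def ext_smul_def ext_zero_def algebra_simps)+
  show "(a + b) * c = a * c + b * c" "a * (b + c) = a * b + a * c"
    by (transfer; simp add: ext_add_def ext_mul_def algebra_simps sum.distrib fun_eq_iff)+
  show "1 * a = a" "a * 1 = a"
    by (transfer; simp add: ext_mul_one_left ext_mul_one_right)+
  show "(0::exterior) \<noteq> 1"
    by transfer (simp add: ext_zero_def ext_one_def fun_eq_iff)
qed

end

lemma Rep_exterior_mult: "Rep_exterior (a * b) = ext_mul (Rep_exterior a) (Rep_exterior b)"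
  by transfer simp

lemma Rep_exterior_add: "Rep_exterior (a + b) = ext_add (Rep_exterior a) (Rep_exterior b)"
  by transfer simp

lemma Rep_exterior_diff: "Rep_exterior (a - b) = ext_diff (Rep_exterior a) (Rep_exterior b)"
  by transfer simp

lemma Rep_exterior_uminus: "Rep_exterior (- a) = ext_smul (-1) (Rep_exterior a)"
  by transfer simp

lemma Rep_exterior_zero: "Rep_exterior 0 = ext_zero"
  by transfer simp

lemma Rep_exterior_one: "Rep_exterior 1 = ext_one"
  by transfer simp

lemma Rep_exterior_infinite: "infinite S \<Longrightarrow> Rep_exterior a S = 0"
  using Rep_exterior[of a] by (simp add: zero_on_infinite_def)

lemma Rep_exterior_sum: "Rep_exterior (sum f A) = ext_sum (\<lambda>x. Rep_exterior (f x)) A"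
  by (induct A rule: infinite_finite_induct)
    (auto simp: Rep_exterior_zero Rep_exterior_add ext_sum_def ext_zero_def ext_add_def)

lemma Rep_exterior_of_nat_mult: "Rep_exterior (of_nat k * a) = ext_smul (of_nat k) (Rep_exterior a)"
  by (induct k) (auto simp: Rep_exterior_zero Rep_exterior_add ext_add_def ext_zero_def
      ext_smul_def algebra_simps)

lemma exterior_eqI: "(\<And>S. Rep_exterior a S = Rep_exterior b S) \<Longrightarrow> a = b"
  by (metis Rep_exterior_inject ext)

lemma exterior_torsion_free: "0 < k \<Longrightarrow> of_nat k * (a::exterior) = 0 \<Longrightarrow> a = 0"
  by (rule exterior_eqI)
    (metis Rep_exterior_of_nat_mult Rep_exterior_zero ext_smul_def ext_zero_def
      mult_eq_0_iff of_nat_eq_0_iff not_gr0)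

lemma exterior_eq_minus_self: "(a::exterior) = - a \<Longrightarrow> a = 0"
  by (rule exterior_torsion_free[of 2]) (simp_all add: mult_2 flip: eq_neg_iff_add_eq_0)

section \<open>Parity and supercommutativity\<close>

definition of_parity :: "nat \<Rightarrow> exterior \<Rightarrow> bool" where
  "of_parity k a \<longleftrightarrow> (\<forall>S. even (card S) \<noteq> even k \<longrightarrow> Rep_exterior a S = 0)"

lemma of_parity_zero [simp]: "of_parity k 0"
  unfolding of_parity_def Rep_exterior_zero ext_zero_def by simp

lemma of_parity_one [simp]: "of_parity 0 1"
  unfolding of_parity_def Rep_exterior_one ext_one_def by simp

lemma of_parity_add: "of_parity k a \<Longrightarrow> of_parity k b \<Longrightarrow> of_parity k (a + b)"
  unfolding of_parity_def Rep_exterior_add ext_add_def by simp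

lemma of_parity_diff: "of_parity k a \<Longrightarrow> of_parity k b \<Longrightarrow> of_parity k (a - b)"
  unfolding of_parity_def Rep_exterior_diff ext_diff_def by simp

lemma of_parity_uminus: "of_parity k a \<Longrightarrow> of_parity k (- a)"
  unfolding of_parity_def Rep_exterior_uminus ext_smul_def by simp

lemma of_parity_sum: "(\<And>x. x \<in> A \<Longrightarrow> of_parity k (f x)) \<Longrightarrow> of_parity k (sum f A)"
  by (induct A rule: infinite_finite_induct) (auto intro: of_parity_add)

lemma of_parity_mod_2: "of_parity (k mod 2) a \<longleftrightarrow> of_parity k a"
  unfolding of_parity_def by simp

lemma of_parity_mult:
  assumes a: "of_parity i a" and b: "of_parity j b"
  shows "of_parity (i + j) (a * b)"
  unfolding of_parity_def
proof (intro allI impI)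
  fix U :: "nat set" assume U: "even (card U) \<noteq> even (i + j)"
  show "Rep_exterior (a * b) U = 0"
  proof (cases "finite U")
    case True
    have "ext_sign S (U - S) * Rep_exterior a S * Rep_exterior b (U - S) = 0" if "S \<in> Pow U" for S
    proof -
      have "card U = card S + card (U - S)"
        using that True by (metis Pow_iff card_Diff_subset finite_subset le_add_diff_inverse card_mono)
      then have "even (card S) \<noteq> even i \<or> even (card (U - S)) \<noteq> even j"
        using U by auto
      then show ?thesis
        using a b unfolding of_parity_def by auto
    qed
    then show ?thesis
      unfolding Rep_exterior_mult ext_mul_def by (intro sum.neutral) blast
  qed (simp add: Rep_exterior_infinite)
qed

lemma of_parity_commute:
  assumes a: "of_parity i a" and b: "of_parity j b"
  shows "b * a = (if odd i \<and> odd j then - (a * b) else a * b)"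
proof -
  define c :: complex where "c = (if odd i \<and> odd j then -1 else 1)"
  have "Rep_exterior (b * a) U = c * Rep_exterior (a * b) U" for U
  proof (cases "finite U")
    case True
    have "Rep_exterior (b * a) U =
        (\<Sum>T\<in>Pow U. ext_sign T (U - T) * Rep_exterior b T * Rep_exterior a (U - T))"
      unfolding Rep_exterior_mult ext_mul_def ..
    also have "\<dots> = (\<Sum>S\<in>Pow U. ext_sign (U - S) S * Rep_exterior b (U - S) * Rep_exterior a S)"
      by (rule sum.reindex_bij_witness[where i="\<lambda>S. U - S" and j="\<lambda>S. U - S"])
        (auto simp: double_diff)
    also have "\<dots> = (\<Sum>S\<in>Pow U. c * (ext_sign S (U - S) * Rep_exterior a S * Rep_exterior b (U - S)))"
    proof (rule sum.cong[OF refl])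
      fix S assume S: "S \<in> Pow U"
      then have sw: "ext_sign (U - S) S = (-1) ^ (card S * card (U - S)) * ext_sign S (U - S)"
        using True by (intro ext_sign_swap) (auto intro: finite_subset)
      show "ext_sign (U - S) S * Rep_exterior b (U - S) * Rep_exterior a S =
          c * (ext_sign S (U - S) * Rep_exterior a S * Rep_exterior b (U - S))"
      proof (cases "Rep_exterior a S = 0 \<or> Rep_exterior b (U - S) = 0")
        case False
        then have "even (card S) = even i" "even (card (U - S)) = even j"
          using a b unfolding of_parity_def by auto
        then have "(-1::complex) ^ (card S * card (U - S)) = c"
          unfolding c_def by (auto simp: minus_one_power_iff)
        then show ?thesis
          unfolding sw by simp
      qed auto
    qed
    also have "\<dots> = c * Rep_exterior (a * b) U"
      unfolding Rep_exterior_mult ext_mul_def by (simp add: sum_distrib_left)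
    finally show ?thesis .
  qed (simp add: Rep_exterior_infinite)
  then show ?thesis
    unfolding c_def
    by (auto intro: exterior_eqI simp: Rep_exterior_uminus ext_smul_def)
qed

lemma odd_commute:
  assumes "of_parity 1 e" and "of_parity k y"
  shows "e * y = (-1) ^ k * (y * e)"
  using of_parity_commute[OF assms(2,1)] by (cases "even k") simp_all

lemma even_mult_commute: "of_parity 0 a \<Longrightarrow> of_parity 0 b \<Longrightarrow> b * a = a * b"
  using of_parity_commute[of 0 a 0 b] by simp

lemma odd_mult_self_eq_0: "of_parity 1 e \<Longrightarrow> e * e = 0"
  using odd_commute[of e 1 e] by (intro exterior_eq_minus_self) simp

typedef even_exterior = "{a. of_parity 0 a}"
  by (rule exI[of _ 0]) simp

setup_lifting type_definition_even_exterior

instantiation even_exterior :: comm_ring_1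
begin

lift_definition zero_even_exterior :: even_exterior is 0
  by simp
lift_definition one_even_exterior :: even_exterior is 1
  by simp
lift_definition plus_even_exterior :: "even_exterior \<Rightarrow> even_exterior \<Rightarrow> even_exterior" is "(+)"
  by (rule of_parity_add)
lift_definition minus_even_exterior :: "even_exterior \<Rightarrow> even_exterior \<Rightarrow> even_exterior" is "(-)"
  by (rule of_parity_diff)
lift_definition uminus_even_exterior :: "even_exterior \<Rightarrow> even_exterior" is uminus
  by (rule of_parity_uminus)
lift_definition times_even_exterior :: "even_exterior \<Rightarrow> even_exterior \<Rightarrow> even_exterior" is "(*)"
  using of_parity_mult by fastforce

instance
proof
  fix a b c :: even_exterior
  show "a * b = b * a"
    by transfer (rule even_mult_commute)
  show "a * b * c = a * (b * c)" "a + b + c = a + (b + c)" "a + b = b + a" "0 + a = a"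
    "- a + a = 0" "a - b = a + - b" "(a + b) * c = a * c + b * c" "1 * a = a"
    by (transfer; simp add: algebra_simps)+
  show "(0::even_exterior) \<noteq> 1"
    by transfer simp
qed

end

interpretation Rep_even_exterior_hom: semiring_hom Rep_even_exterior
  by unfold_locales (simp_all add: zero_even_exterior.rep_eq one_even_exterior.rep_eq
      plus_even_exterior.rep_eq times_even_exterior.rep_eq)

lemma even_exterior_torsion_free:
  assumes "0 < k" and "of_nat k * (c::even_exterior) = 0"
  shows "c = 0"
proof -
  have "of_nat k * Rep_even_exterior c = 0"
    using Rep_even_exterior_hom.hom_mult_eq_zero[OF assms(2)]
    by (simp add: Rep_even_exterior_hom.hom_of_nat)
  then have "Rep_even_exterior c = Rep_even_exterior 0"
    using exterior_torsion_free[OF assms(1)] by (simp add: Rep_even_exterior_hom.hom_zero)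
  then show ?thesis
    by (metis Rep_even_exterior_hom.hom_zero Rep_even_exterior_inject)
qed

section \<open>Matrices with odd entries\<close>

definition odd_mat :: "nat \<Rightarrow> exterior mat \<Rightarrow> bool" where
  "odd_mat n A \<longleftrightarrow> A \<in> carrier_mat n n \<and> (\<forall>i<n. \<forall>j<n. of_parity 1 (A $$ (i,j)))"

lemma of_parity_index_pow_odd_mat:
  assumes A: "odd_mat n A"
  shows "i < n \<Longrightarrow> j < n \<Longrightarrow> of_parity k ((A ^\<^sub>m k) $$ (i,j))"
proof (induct k arbitrary: i j)
  case (Suc k)
  have "of_parity (Suc k) ((A ^\<^sub>m k) $$ (i,l) * A $$ (l,j))" if "l < n" for l
    using of_parity_mult[OF Suc(1)[OF Suc(2) that], of 1 "A $$ (l,j)"] A Suc(3) that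
    by (simp add: odd_mat_def)
  moreover have "(A ^\<^sub>m Suc k) $$ (i,j) = (\<Sum>l<n. (A ^\<^sub>m k) $$ (i,l) * A $$ (l,j))"
    using A Suc(2,3) by (intro index_pow_mat_Suc) (simp_all add: odd_mat_def)
  ultimately show ?case
    by (auto intro: of_parity_sum)
qed (use A in \<open>auto simp: odd_mat_def\<close>)

text \<open>An odd entry anticommutes past an entry of odd degree, so the trace of an even power equals
  its own negative.\<close>

lemma trace_even_pow_odd_mat_eq_0:
  assumes A: "odd_mat n A" and k: "even k" "0 < k"
  shows "mat_trace (A ^\<^sub>m k) = 0"
proof -
  obtain m where m: "k = Suc m" "odd m"
    using k by (metis even_Suc gr0_implies_Suc)
  have A_carrier: "A \<in> carrier_mat n n" and Am: "A ^\<^sub>m m \<in> carrier_mat n n"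
    using A by (simp_all add: odd_mat_def)
  have "mat_trace (A ^\<^sub>m k) = (\<Sum>i<n. \<Sum>l<n. A $$ (i,l) * (A ^\<^sub>m m) $$ (l,i))"
    unfolding m pow_mat_Suc_left[OF A_carrier] mat_trace_carrier[OF mult_carrier_mat[OF A_carrier Am]]
    by (intro sum.cong refl index_mult_mat_sum[OF A_carrier Am]) auto
  also have "\<dots> = (\<Sum>i<n. \<Sum>l<n. - ((A ^\<^sub>m m) $$ (l,i) * A $$ (i,l)))"
  proof (intro sum.cong refl)
    fix i l assume "i \<in> {..<n}" "l \<in> {..<n}"
    then have "of_parity m ((A ^\<^sub>m m) $$ (l,i))" and "of_parity 1 (A $$ (i,l))"
      using A of_parity_index_pow_odd_mat[OF A] by (auto simp: odd_mat_def)
    from of_parity_commute[OF this] m(2)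
    show "A $$ (i,l) * (A ^\<^sub>m m) $$ (l,i) = - ((A ^\<^sub>m m) $$ (l,i) * A $$ (i,l))"
      by simp
  qed
  also have "\<dots> = - (\<Sum>l<n. \<Sum>i<n. (A ^\<^sub>m m) $$ (l,i) * A $$ (i,l))"
    by (subst sum.swap) (simp add: sum_negf)
  also have "\<dots> = - mat_trace (A ^\<^sub>m k)"
    unfolding m mat_trace_carrier[OF pow_carrier_mat[OF A_carrier]]
    by (simp add: index_pow_mat_Suc[OF A_carrier] del: pow_mat.simps)
  finally show ?thesis
    by (rule exterior_eq_minus_self)
qed

lemma trace_even_pow_odd_mat:
  assumes X: "odd_mat n X"
  shows "mat_trace (X ^\<^sub>m (2*k)) = (if k = 0 then of_nat n else 0)"
proof (cases "k = 0")
  case True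
  have "X \<in> carrier_mat n n"
    using X by (simp add: odd_mat_def)
  with True show ?thesis
    by (simp add: mat_trace_carrier[of _ n n])
next
  case False
  then show ?thesis
    using trace_even_pow_odd_mat_eq_0[OF X, of "2*k"] by simp
qed

lemma odd_mat_pow_double_dim_eq_0:
  assumes A: "odd_mat n A"
  shows "A ^\<^sub>m (2 * n) = 0\<^sub>m n n"
proof -
  have A_carrier: "A \<in> carrier_mat n n"
    using A by (simp add: odd_mat_def)
  define Y where "Y = mat n n (\<lambda>(i,j). Abs_even_exterior ((A * A) $$ (i,j)))"
  have Y: "Y \<in> carrier_mat n n"
    unfolding Y_def by simp
  have "A ^\<^sub>m 2 = A * A"
    using pow_mat_double[OF A_carrier, of 1] A_carrier by simp
  then have "of_parity 0 ((A * A) $$ (i,j))" if "i < n" "j < n" for i j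
    using of_parity_index_pow_odd_mat[OF A that, of 2] of_parity_mod_2[of 2] by simp
  then have "map_mat Rep_even_exterior Y = A * A"
    unfolding Y_def using A_carrier by (auto intro!: eq_matI simp: Abs_even_exterior_inverse)
  then have pow_Y: "map_mat Rep_even_exterior (Y ^\<^sub>m k) = A ^\<^sub>m (2 * k)" for k
    using Rep_even_exterior_hom.mat_hom_pow[OF Y, of k] pow_mat_double[OF A_carrier] by simp
  have "mat_trace (Y ^\<^sub>m k) = 0" if "1 \<le> k" for k
  proof -
    have "Rep_even_exterior (mat_trace (Y ^\<^sub>m k)) = mat_trace (A ^\<^sub>m (2 * k))"
      using Y by (simp add: mat_trace_def Rep_even_exterior_hom.hom_sum flip: pow_Y)
    also have "\<dots> = 0"
      using A that by (intro trace_even_pow_odd_mat_eq_0) auto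
    finally show ?thesis
      by (metis Rep_even_exterior_inject Rep_even_exterior_hom.hom_zero)
  qed
  then have "Y ^\<^sub>m n = 0\<^sub>m n n"
    using Y even_exterior_torsion_free by (intro pow_dim_eq_0_if_traceless_powers)
  then have "map_mat Rep_even_exterior (Y ^\<^sub>m n) = 0\<^sub>m n n"
    by (auto intro!: eq_matI simp: Rep_even_exterior_hom.hom_zero)
  then show ?thesis
    unfolding pow_Y .
qed

section \<open>Perturbing by a fresh generator\<close>

definition gen :: "nat \<Rightarrow> exterior" where
  "gen m = Abs_exterior (ext_gen m)"

lemma Rep_exterior_gen: "Rep_exterior (gen m) = ext_gen m"
  unfolding gen_def by (simp add: Abs_exterior_inverse zero_on_infinite_def ext_gen_def)

lemma of_parity_gen: "of_parity 1 (gen m)"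
  unfolding of_parity_def Rep_exterior_gen ext_gen_def by auto

definition avoids :: "nat \<Rightarrow> exterior \<Rightarrow> bool" where
  "avoids N a \<longleftrightarrow> (\<forall>S. N \<in> S \<longrightarrow> Rep_exterior a S = 0)"

lemma avoids_zero [simp]: "avoids N 0"
  unfolding avoids_def Rep_exterior_zero ext_zero_def by simp

lemma avoids_one [simp]: "avoids N 1"
  unfolding avoids_def Rep_exterior_one ext_one_def by auto

lemma avoids_gen: "m \<noteq> N \<Longrightarrow> avoids N (gen m)"
  unfolding avoids_def Rep_exterior_gen ext_gen_def by auto

lemma avoids_add: "avoids N a \<Longrightarrow> avoids N b \<Longrightarrow> avoids N (a + b)"
  unfolding avoids_def Rep_exterior_add ext_add_def by simp

lemma avoids_uminus: "avoids N a \<Longrightarrow> avoids N (- a)"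
  unfolding avoids_def Rep_exterior_uminus ext_smul_def by simp

lemma avoids_sum: "(\<And>x. x \<in> A \<Longrightarrow> avoids N (f x)) \<Longrightarrow> avoids N (sum f A)"
  by (induct A rule: infinite_finite_induct) (auto intro: avoids_add)

lemma avoids_mult:
  assumes "avoids N a" and "avoids N b"
  shows "avoids N (a * b)"
  unfolding avoids_def
proof (intro allI impI)
  fix U assume "N \<in> U"
  then have "ext_sign S (U - S) * Rep_exterior a S * Rep_exterior b (U - S) = 0" for S
    using assms unfolding avoids_def by (cases "N \<in> S") auto
  then show "Rep_exterior (a * b) U = 0"
    unfolding Rep_exterior_mult ext_mul_def by (intro sum.neutral) blast
qed

lemma avoids_neg_one_power: "avoids N ((-1) ^ k)"
  by (simp add: minus_one_power_iff avoids_uminus)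

lemma mult_gen_eq_0_imp_eq_0:
  assumes a: "avoids N a" and a_gen: "a * gen N = 0"
  shows "a = 0"
proof (rule exterior_eqI)
  fix S
  show "Rep_exterior a S = Rep_exterior 0 S"
  proof (cases "finite S \<and> N \<notin> S")
    case True
    define U where "U = insert N S"
    have "Rep_exterior (a * gen N) U = (\<Sum>T\<in>Pow U. if T = S then ext_sign S {N} * Rep_exterior a S else 0)"
      unfolding Rep_exterior_mult ext_mul_def Rep_exterior_gen
    proof (rule sum.cong[OF refl])
      fix T assume "T \<in> Pow U"
      then have "U - T = {N} \<longleftrightarrow> T = S"
        using True unfolding U_def by auto
      then show "ext_sign T (U - T) * Rep_exterior a T * ext_gen N (U - T) =
          (if T = S then ext_sign S {N} * Rep_exterior a S else 0)"
        by (auto simp: ext_gen_def)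
    qed
    also have "\<dots> = ext_sign S {N} * Rep_exterior a S"
      unfolding U_def using True by (subst sum.delta) auto
    finally have "ext_sign S {N} * Rep_exterior a S = 0"
      using a_gen by (simp add: Rep_exterior_zero ext_zero_def)
    moreover have "ext_sign S {N} \<noteq> 0"
      unfolding ext_sign_def by simp
    ultimately show ?thesis
      by (simp add: Rep_exterior_zero ext_zero_def)
  qed (use a Rep_exterior_infinite in \<open>auto simp: avoids_def Rep_exterior_zero ext_zero_def\<close>)
qed

lemma odd_sandwich_eq_0:
  assumes e: "of_parity 1 e" and y: "of_parity k y"
  shows "e * y * e = 0"
proof -
  have "e * y * e = (-1) ^ k * (y * (e * e))"
    by (simp add: odd_commute[OF e y] mult.assoc)
  then show ?thesis
    by (simp add: odd_mult_self_eq_0[OF e])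
qed

lemma avoids_index_pow_mat:
  assumes X: "X \<in> carrier_mat n n" and avoid: "\<And>i j. i < n \<Longrightarrow> j < n \<Longrightarrow> avoids N (X $$ (i,j))"
  shows "i < n \<Longrightarrow> j < n \<Longrightarrow> avoids N ((X ^\<^sub>m k) $$ (i,j))"
proof (induct k arbitrary: i j)
  case (Suc k)
  then show ?case
    using X avoid by (auto simp: index_pow_mat_Suc[OF X] intro!: avoids_sum avoids_mult
        simp del: pow_mat.simps)
qed (use X in auto)

definition single_mat :: "nat \<Rightarrow> nat \<Rightarrow> nat \<Rightarrow> 'a::zero \<Rightarrow> 'a mat" where
  "single_mat n p q e = mat n n (\<lambda>(i,j). if i = p \<and> j = q then e else 0)"

lemma odd_mat_add_single_mat:
  "odd_mat n X \<Longrightarrow> of_parity 1 e \<Longrightarrow> odd_mat n (X + single_mat n p q e)"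
  unfolding odd_mat_def single_mat_def by (auto intro: of_parity_add)

lemma sum_index_pow_mat_mult:
  assumes X: "X \<in> carrier_mat n n" and q: "q < n" and j: "j < n"
  shows "(\<Sum>l<n. (\<Sum>a<m. x a * (X ^\<^sub>m (m - Suc a)) $$ (q,l)) * X $$ (l,j)) =
    (\<Sum>a<m. x a * (X ^\<^sub>m (Suc m - Suc a)) $$ (q,j))"
proof -
  have "(\<Sum>l<n. (\<Sum>a<m. x a * (X ^\<^sub>m (m - Suc a)) $$ (q,l)) * X $$ (l,j)) =
      (\<Sum>a<m. x a * (\<Sum>l<n. (X ^\<^sub>m (m - Suc a)) $$ (q,l) * X $$ (l,j)))"
    by (simp add: sum_distrib_right sum_distrib_left mult.assoc) (rule sum.swap)
  also have "\<dots> = (\<Sum>a<m. x a * (X ^\<^sub>m (Suc m - Suc a)) $$ (q,j))"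
  proof (intro sum.cong refl)
    fix a assume "a \<in> {..<m}"
    then have "Suc m - Suc a = Suc (m - Suc a)"
      by auto
    then show "x a * (\<Sum>l<n. (X ^\<^sub>m (m - Suc a)) $$ (q,l) * X $$ (l,j)) =
        x a * (X ^\<^sub>m (Suc m - Suc a)) $$ (q,j)"
      using index_pow_mat_Suc[OF X q j, of "m - Suc a"] by (simp only:)
  qed
  finally show ?thesis .
qed

text \<open>Since \<open>e y e = 0\<close> for odd \<open>e\<close>, a perturbation of \<open>X\<close> by \<open>e\<close> in a single entry affects \<open>X\<^sup>m\<close>
  only to first order in \<open>e\<close>.\<close>

lemma index_pow_mat_add_single_mat:
  assumes X: "odd_mat n X" and e: "of_parity 1 e" and p: "p < n" and q: "q < n"
  shows "i < n \<Longrightarrow> j < n \<Longrightarrow> ((X + single_mat n p q e) ^\<^sub>m m) $$ (i,j) =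
    (X ^\<^sub>m m) $$ (i,j) + (\<Sum>a<m. (X ^\<^sub>m a) $$ (i,p) * e * (X ^\<^sub>m (m - Suc a)) $$ (q,j))"
proof (induct m arbitrary: i j)
  case (Suc m)
  have X_carrier: "X \<in> carrier_mat n n"
    using X by (simp add: odd_mat_def)
  define Z where "Z = single_mat n p q e"
  have XZ: "X + Z \<in> carrier_mat n n"
    using X_carrier unfolding Z_def single_mat_def by simp
  define S where "S l = (\<Sum>a<m. (X ^\<^sub>m a) $$ (i,p) * e * (X ^\<^sub>m (m - Suc a)) $$ (q,l))" for l
  define z where "z l = (if l = p \<and> j = q then e else 0)" for l
  have "S p * e = 0"
    using odd_sandwich_eq_0[OF e of_parity_index_pow_odd_mat[OF X q p]]
    by (simp add: S_def sum_distrib_right mult.assoc)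
  then have "S l * z l = 0" for l
    by (simp add: z_def)
  then have second_order: "(\<Sum>l<n. S l * z l) = 0"
    by simp
  have "((X + Z) ^\<^sub>m Suc m) $$ (i,j) = (\<Sum>l<n. ((X + Z) ^\<^sub>m m) $$ (i,l) * (X + Z) $$ (l,j))"
    by (rule index_pow_mat_Suc[OF XZ Suc(2,3)])
  also have "\<dots> = (\<Sum>l<n. ((X ^\<^sub>m m) $$ (i,l) + S l) * (X $$ (l,j) + z l))"
    using Suc X_carrier unfolding S_def z_def Z_def single_mat_def by (intro sum.cong refl) auto
  also have "\<dots> = (\<Sum>l<n. (X ^\<^sub>m m) $$ (i,l) * X $$ (l,j)) + (\<Sum>l<n. (X ^\<^sub>m m) $$ (i,l) * z l)
      + (\<Sum>l<n. S l * X $$ (l,j)) + (\<Sum>l<n. S l * z l)"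
    by (simp add: algebra_simps sum.distrib)
  also have "(\<Sum>l<n. (X ^\<^sub>m m) $$ (i,l) * X $$ (l,j)) = (X ^\<^sub>m Suc m) $$ (i,j)"
    by (rule index_pow_mat_Suc[OF X_carrier Suc(2,3), symmetric])
  also have "(\<Sum>l<n. (X ^\<^sub>m m) $$ (i,l) * z l) = (X ^\<^sub>m m) $$ (i,p) * e * (X ^\<^sub>m 0) $$ (q,j)"
    using p q Suc(3) X_carrier by (auto simp: z_def if_distrib sum.delta cong: if_cong)
  also have "(\<Sum>l<n. S l * X $$ (l,j)) =
      (\<Sum>a<m. (X ^\<^sub>m a) $$ (i,p) * e * (X ^\<^sub>m (Suc m - Suc a)) $$ (q,j))"
    unfolding S_def by (rule sum_index_pow_mat_mult[OF X_carrier q Suc(3)])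
  finally show ?case
    unfolding Z_def second_order by (simp add: algebra_simps)
qed (use X in \<open>auto simp: odd_mat_def single_mat_def\<close>)

text \<open>Rosset's theorem for \<open>X\<close> and for \<open>X + e E\<^sub>p\<^sub>q\<close>, with \<open>e\<close> a generator not occurring in \<open>X\<close>,
  kills the first-order term; the fresh generator can then be cancelled.\<close>

lemma odd_mat_linear_term_eq_0:
  assumes X: "odd_mat n X" and avoid: "\<And>i j. i < n \<Longrightarrow> j < n \<Longrightarrow> avoids N (X $$ (i,j))"
    and p: "p < n" and q: "q < n" and j: "j < n"
  shows "(\<Sum>a<2*n. (-1) ^ (2*n - Suc a) * ((X ^\<^sub>m a) $$ (p,p) * (X ^\<^sub>m (2*n - Suc a)) $$ (q,j))) = 0"
proof -
  define e where "e = gen N"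
  have e: "of_parity 1 e"
    unfolding e_def by (rule of_parity_gen)
  have X_carrier: "X \<in> carrier_mat n n"
    using X by (simp add: odd_mat_def)
  have "(\<Sum>a<2*n. (X ^\<^sub>m a) $$ (p,p) * e * (X ^\<^sub>m (2*n - Suc a)) $$ (q,j)) = 0"
    using index_pow_mat_add_single_mat[OF X e p q p j, of "2*n"] p j
      odd_mat_pow_double_dim_eq_0[OF X] odd_mat_pow_double_dim_eq_0[OF odd_mat_add_single_mat[OF X e]]
    by simp
  moreover have "(X ^\<^sub>m a) $$ (p,p) * e * (X ^\<^sub>m b) $$ (q,j) =
      (-1) ^ b * ((X ^\<^sub>m a) $$ (p,p) * (X ^\<^sub>m b) $$ (q,j)) * e" for a b
    using odd_commute[OF e of_parity_index_pow_odd_mat[OF X q j, of b]]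
    by (cases "even b") (simp_all add: mult.assoc)
  ultimately have "(\<Sum>a<2*n. (-1) ^ (2*n - Suc a) *
      ((X ^\<^sub>m a) $$ (p,p) * (X ^\<^sub>m (2*n - Suc a)) $$ (q,j))) * gen N = 0"
    by (simp add: sum_distrib_right e_def)
  moreover have "avoids N (\<Sum>a<2*n. (-1) ^ (2*n - Suc a) *
      ((X ^\<^sub>m a) $$ (p,p) * (X ^\<^sub>m (2*n - Suc a)) $$ (q,j)))"
    using p q j by (intro avoids_sum avoids_mult avoids_neg_one_power
        avoids_index_pow_mat[OF X_carrier avoid])
  ultimately show ?thesis
    by (rule mult_gen_eq_0_imp_eq_0[rotated])
qed

lemma sum_lessThan_even_odd: "(\<Sum>a<2 * (n::nat). f a) = (\<Sum>k<n. f (2*k) + f (2*k+1))"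
  by (induct n) (simp_all add: sum.distrib algebra_simps)

text \<open>Summing over \<open>p\<close> turns the first-order terms into traces; the even ones vanish except
  \<open>tr X\<^sup>0 = n\<close>.\<close>

lemma odd_mat_trace_identity:
  assumes X: "odd_mat n X" and avoid: "\<And>i j. i < n \<Longrightarrow> j < n \<Longrightarrow> avoids N (X $$ (i,j))"
    and q: "q < n" and j: "j < n"
  shows "(\<Sum>k<n. mat_trace (X ^\<^sub>m (2*k+1)) * (X ^\<^sub>m (2*n-2-2*k)) $$ (q,j)) =
    of_nat n * (X ^\<^sub>m (2*n-1)) $$ (q,j)"
proof -
  have X_carrier: "X \<in> carrier_mat n n"
    using X by (simp add: odd_mat_def)
  define t where "t a = (-1) ^ (2*n - Suc a) * (mat_trace (X ^\<^sub>m a) * (X ^\<^sub>m (2*n - Suc a)) $$ (q,j))"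
    for a
  have "(\<Sum>a<2*n. t a) =
      (\<Sum>p<n. \<Sum>a<2*n. (-1) ^ (2*n - Suc a) * ((X ^\<^sub>m a) $$ (p,p) * (X ^\<^sub>m (2*n - Suc a)) $$ (q,j)))"
    unfolding t_def mat_trace_carrier[OF pow_carrier_mat[OF X_carrier]]
    by (subst sum.swap) (simp add: sum_distrib_left sum_distrib_right)
  also have "\<dots> = 0"
    using odd_mat_linear_term_eq_0[OF X avoid _ q j] by simp
  finally have "(\<Sum>k<n. t (2*k) + t (2*k+1)) = 0"
    by (simp only: sum_lessThan_even_odd)
  moreover have "t (2*k) + t (2*k+1) = (if k = 0 then - (of_nat n * (X ^\<^sub>m (2*n-1)) $$ (q,j)) else 0)
      + mat_trace (X ^\<^sub>m (2*k+1)) * (X ^\<^sub>m (2*n-2-2*k)) $$ (q,j)" if "k \<in> {..<n}" for k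
  proof -
    have "odd (2*n - Suc (2*k))" "even (2*n - Suc (2*k+1))" "2*n - Suc (2*k+1) = 2*n-2-2*k"
      using that by auto
    then show ?thesis
      by (simp add: t_def trace_even_pow_odd_mat[OF X] del: pow_mat.simps)
  qed
  then have "(\<Sum>k<n. t (2*k) + t (2*k+1)) = - (of_nat n * (X ^\<^sub>m (2*n-1)) $$ (q,j)) +
      (\<Sum>k<n. mat_trace (X ^\<^sub>m (2*k+1)) * (X ^\<^sub>m (2*n-2-2*k)) $$ (q,j))"
    using q by (simp add: sum.distrib del: pow_mat.simps)
  ultimately show ?thesis
    by (simp add: algebra_simps del: pow_mat.simps)
qed

section \<open>The generic matrix\<close>

definition generic_mat :: "nat \<Rightarrow> exterior mat" where
  "generic_mat n = mat n n (\<lambda>(i,j). gen (i * n + j))"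

lemma odd_mat_generic_mat: "odd_mat n (generic_mat n)"
  unfolding odd_mat_def generic_mat_def using of_parity_gen by auto

lemma avoids_generic_mat: "i < n \<Longrightarrow> j < n \<Longrightarrow> avoids (n * n) (generic_mat n $$ (i,j))"
proof -
  assume ij: "i < n" "j < n"
  have "i * n + j < Suc i * n"
    using ij by simp
  also have "\<dots> \<le> n * n"
    using ij by (intro mult_le_mono1) simp
  finally show ?thesis
    using ij unfolding generic_mat_def by (simp add: avoids_gen)
qed

lemma Rep_exterior_index_pow_generic_mat:
  assumes "i < n" "j < n"
  shows "Rep_exterior ((generic_mat n ^\<^sub>m m) $$ (i,j)) = emat_pow n (genX n) m i j"
  using assms
proof (induct m arbitrary: j)
  case 0
  then show ?case
    by (simp add: generic_mat_def emat_id_def Rep_exterior_one Rep_exterior_zero)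
next
  case (Suc m)
  have X: "generic_mat n \<in> carrier_mat n n"
    unfolding generic_mat_def by simp
  have "Rep_exterior ((generic_mat n ^\<^sub>m Suc m) $$ (i,j)) = ext_sum (\<lambda>l.
      ext_mul (Rep_exterior ((generic_mat n ^\<^sub>m m) $$ (i,l))) (Rep_exterior (generic_mat n $$ (l,j))))
      {..<n}"
    by (simp add: index_pow_mat_Suc[OF X Suc.prems] Rep_exterior_sum Rep_exterior_mult
        del: pow_mat.simps)
  also have "\<dots> = ext_sum (\<lambda>l. ext_mul (emat_pow n (genX n) m i l) (genX n l j)) {..<n}"
    unfolding ext_sum_def
    by (intro ext sum.cong refl) (simp add: Suc, simp add: Suc.prems generic_mat_def Rep_exterior_gen genX_def)
  finally show ?case
    by (simp add: emat_mul_def)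
qed

lemma Rep_exterior_trace_pow_generic_mat:
  "Rep_exterior (mat_trace (generic_mat n ^\<^sub>m m)) = emat_tr n (emat_pow n (genX n) m)"
proof -
  have X: "generic_mat n ^\<^sub>m m \<in> carrier_mat n n"
    by (simp add: generic_mat_def)
  show ?thesis
    unfolding mat_trace_carrier[OF X] Rep_exterior_sum emat_tr_def ext_sum_def
    by (intro ext sum.cong refl) (simp add: Rep_exterior_index_pow_generic_mat)
qed

theorem theorem2p1:
  fixes n :: nat
  shows "\<forall>i<n. \<forall>j<n.
    ext_diff (ext_smul (of_nat n) (emat_pow n (genX n) (2 * n - 1) i j))
      (ext_sum (\<lambda>k. ext_mul (emat_tr n (emat_pow n (genX n) (2 * k + 1)))
                              (emat_pow n (genX n) (2 * n - 2 - 2 * k) i j)) {..<n})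
    = ext_zero"
proof (intro allI impI)
  fix i j assume ij: "i < n" "j < n"
  let ?X = "generic_mat n"
  have "Rep_exterior (of_nat n * (?X ^\<^sub>m (2*n-1)) $$ (i,j) -
      (\<Sum>k<n. mat_trace (?X ^\<^sub>m (2*k+1)) * (?X ^\<^sub>m (2*n-2-2*k)) $$ (i,j))) = ext_zero"
    using odd_mat_trace_identity[OF odd_mat_generic_mat avoids_generic_mat ij]
    by (simp add: Rep_exterior_zero)
  then show "ext_diff (ext_smul (of_nat n) (emat_pow n (genX n) (2 * n - 1) i j))
      (ext_sum (\<lambda>k. ext_mul (emat_tr n (emat_pow n (genX n) (2 * k + 1)))
                              (emat_pow n (genX n) (2 * n - 2 - 2 * k) i j)) {..<n})
    = ext_zero"
    using ij unfolding Rep_exterior_diff Rep_exterior_of_nat_mult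
    by (simp add: Rep_exterior_sum Rep_exterior_mult Rep_exterior_index_pow_generic_mat
        Rep_exterior_trace_pow_generic_mat del: pow_mat.simps emat_pow.simps)
qed

end
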